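(* Let $X,Y$ be continuous random variables and $\mathcal{B}$ a natural correlation basis. Then: (i) if $(X,Y)$ is h-symmetric, $\rho^B_{jk}(X,Y)=0$ for $k$ odd; (ii) if $(X,Y)$ is v-symmetric, $\rho^B_{jk}(X,Y)=0$ for $j$ odd; (iii) if $(X,Y)$ is radially symmetric, $\rho^B_{jk}(X,Y)=0$ for $j+k$ odd; (iv) if $(X,Y)$ is jointly symmetric, $\rho^B_{jk}(X,Y)=0$ for $j$ odd or $k$ odd.
   Context: A correlation basis is a complete orthonormal system $\{B_j:j\in\mathbb{N}_0\}$ of $\mathcal{L}^2([0,1])$ with $B_0\equiv1$. It is natural if each $B_j$, $j\ge1$, is continuous on $[0,1]$, continuously differentiable on $(0,1)$ with bounded derivative vanishing exactly at its turning points, piecewise strictly monotonic on a finite partition, and satisfies: $B_j'>0$ on some $(1-\epsilon_j,1)$; $B_j$ has exactly $j-1$ turning points; $B_j(1-u)=(-1)^jB_j(u)$. Basis correlation: $\rho^B_{jk}(X,Y)=\rho(B_j(F_X(X)),B_k(F_Y(Y)))$. A random vector $(X,Y)$ is h-symmetric if $(X,Y-a)\stackrel{d}{=}(X,a-Y)$ for some $a\in\mathbb{R}$; v-symmetric if $(X-b,Y)\stackrel{d}{=}(b-X,Y)$ for some $b\in\mathbb{R}$; radially symmetric if $(X-b,Y-a)\stackrel{d}{=}(b-X,a-Y)$ for some $a,b\in\mathbb{R}$; jointly symmetric if it is both h-symmetric and v-symmetric. *)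

theory Defs
  imports "HOL-Probability.Probability"
begin

abbreviation unit_leb :: "real measure" where
  "unit_leb \<equiv> lebesgue_on {0..1}"

definition in_L2_unit :: "(real \<Rightarrow> real) \<Rightarrow> bool" where
  "in_L2_unit f \<longleftrightarrow> f \<in> borel_measurable unit_leb \<and> integrable unit_leb (\<lambda>x. (f x)\<^sup>2)"

definition L2_inner_unit :: "(real \<Rightarrow> real) \<Rightarrow> (real \<Rightarrow> real) \<Rightarrow> real" where
  "L2_inner_unit f g = (LINT x|unit_leb. f x * g x)"

definition complete_orthonormal_system :: "(nat \<Rightarrow> real \<Rightarrow> real) \<Rightarrow> bool" where
  "complete_orthonormal_system B \<longleftrightarrow>
     (\<forall>j. in_L2_unit (B j)) \<and>
     (\<forall>j k. L2_inner_unit (B j) (B k) = (if j = k then 1 else 0)) \<and>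
     (\<forall>f. in_L2_unit f \<and> (\<forall>j. L2_inner_unit f (B j) = 0) \<longrightarrow> (AE x in unit_leb. f x = 0))"

definition correlation_basis :: "(nat \<Rightarrow> real \<Rightarrow> real) \<Rightarrow> bool" where
  "correlation_basis B \<longleftrightarrow> complete_orthonormal_system B \<and> (\<forall>u\<in>{0..1}. B 0 u = 1)"

text \<open>A turning point of f is an interior point of (0,1) where f has a strict local
  extremum (i.e. where f changes its direction of monotonicity).\<close>
definition turning_point :: "(real \<Rightarrow> real) \<Rightarrow> real \<Rightarrow> bool" where
  "turning_point f u \<longleftrightarrow> u \<in> {0<..<1} \<and>
     (\<exists>e>0. (\<forall>v. 0 < \<bar>v - u\<bar> \<and> \<bar>v - u\<bar> < e \<longrightarrow> f v < f u) \<or>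
            (\<forall>v. 0 < \<bar>v - u\<bar> \<and> \<bar>v - u\<bar> < e \<longrightarrow> f v > f u))"

definition piecewise_strictly_monotonic :: "(real \<Rightarrow> real) \<Rightarrow> bool" where
  "piecewise_strictly_monotonic f \<longleftrightarrow>
     (\<exists>(t :: nat \<Rightarrow> real) m. t 0 = 0 \<and> t m = 1 \<and>
        (\<forall>i<m. t i < t (Suc i) \<and>
           (strict_mono_on {t i..t (Suc i)} f \<or> monotone_on {t i..t (Suc i)} (<) (>) f)))"

definition natural_basis_function :: "nat \<Rightarrow> (real \<Rightarrow> real) \<Rightarrow> bool" where
  "natural_basis_function j b \<longleftrightarrow>
     continuous_on {0..1} b \<and>
     (\<exists>b'. (\<forall>u\<in>{0<..<1}. (b has_real_derivative b' u) (at u)) \<and>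
           continuous_on {0<..<1} b' \<and>
           bounded (b' ` {0<..<1}) \<and>
           (\<forall>u\<in>{0<..<1}. b' u = 0 \<longleftrightarrow> turning_point b u) \<and>
           (\<exists>\<epsilon>>0. \<forall>u\<in>{1 - \<epsilon><..<1}. b' u > 0)) \<and>
     piecewise_strictly_monotonic b \<and>
     finite {u. turning_point b u} \<and> card {u. turning_point b u} = j - 1 \<and>
     (\<forall>u\<in>{0..1}. b (1 - u) = (-1) ^ j * b u)"

definition natural_correlation_basis :: "(nat \<Rightarrow> real \<Rightarrow> real) \<Rightarrow> bool" where
  "natural_correlation_basis B \<longleftrightarrow>
     correlation_basis B \<and> (\<forall>j\<ge>1. natural_basis_function j (B j))"

definition distr_fun :: "'a measure \<Rightarrow> ('a \<Rightarrow> real) \<Rightarrow> real \<Rightarrow> real" where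
  "distr_fun M X = cdf (distr M borel X)"

definition continuous_rv :: "'a measure \<Rightarrow> ('a \<Rightarrow> real) \<Rightarrow> bool" where
  "continuous_rv M X \<longleftrightarrow> X \<in> borel_measurable M \<and> (\<forall>x. isCont (distr_fun M X) x)"

definition rv_mean :: "'a measure \<Rightarrow> ('a \<Rightarrow> real) \<Rightarrow> real" where
  "rv_mean M U = (LINT \<omega>|M. U \<omega>)"

definition rv_cov :: "'a measure \<Rightarrow> ('a \<Rightarrow> real) \<Rightarrow> ('a \<Rightarrow> real) \<Rightarrow> real" where
  "rv_cov M U V = (LINT \<omega>|M. (U \<omega> - rv_mean M U) * (V \<omega> - rv_mean M V))"

text \<open>Pearson correlation (with Isabelle's convention x / 0 = 0 in degenerate cases).\<close>
definition rv_corr :: "'a measure \<Rightarrow> ('a \<Rightarrow> real) \<Rightarrow> ('a \<Rightarrow> real) \<Rightarrow> real" where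
  "rv_corr M U V = rv_cov M U V / sqrt (rv_cov M U U * rv_cov M V V)"

definition basis_corr :: "(nat \<Rightarrow> real \<Rightarrow> real) \<Rightarrow> nat \<Rightarrow> nat \<Rightarrow> 'a measure \<Rightarrow>
    ('a \<Rightarrow> real) \<Rightarrow> ('a \<Rightarrow> real) \<Rightarrow> real" where
  "basis_corr B j k M X Y =
     rv_corr M (\<lambda>\<omega>. B j (distr_fun M X (X \<omega>))) (\<lambda>\<omega>. B k (distr_fun M Y (Y \<omega>)))"

definition h_symmetric :: "'a measure \<Rightarrow> ('a \<Rightarrow> real) \<Rightarrow> ('a \<Rightarrow> real) \<Rightarrow> bool" where
  "h_symmetric M X Y \<longleftrightarrow> (\<exists>a::real.
     distr M borel (\<lambda>\<omega>. (X \<omega>, Y \<omega> - a)) = distr M borel (\<lambda>\<omega>. (X \<omega>, a - Y \<omega>)))"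

definition v_symmetric :: "'a measure \<Rightarrow> ('a \<Rightarrow> real) \<Rightarrow> ('a \<Rightarrow> real) \<Rightarrow> bool" where
  "v_symmetric M X Y \<longleftrightarrow> (\<exists>b::real.
     distr M borel (\<lambda>\<omega>. (X \<omega> - b, Y \<omega>)) = distr M borel (\<lambda>\<omega>. (b - X \<omega>, Y \<omega>)))"

definition radially_symmetric :: "'a measure \<Rightarrow> ('a \<Rightarrow> real) \<Rightarrow> ('a \<Rightarrow> real) \<Rightarrow> bool" where
  "radially_symmetric M X Y \<longleftrightarrow> (\<exists>a b::real.
     distr M borel (\<lambda>\<omega>. (X \<omega> - b, Y \<omega> - a)) = distr M borel (\<lambda>\<omega>. (b - X \<omega>, a - Y \<omega>)))"

definition jointly_symmetric :: "'a measure \<Rightarrow> ('a \<Rightarrow> real) \<Rightarrow> ('a \<Rightarrow> real) \<Rightarrow> bool" where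
  "jointly_symmetric M X Y \<longleftrightarrow> h_symmetric M X Y \<and> v_symmetric M X Y"

end

theory Submission
  imports Defs
begin

text \<open>If the law of (X, Y) is invariant under a reflection of its second coordinate about a,
  then so is the law of Y, and continuity of Y turns this into F_Y(2a - y) = 1 - F_Y(y).
  The symmetry B_k(1 - u) = (-1)^k B_k(u) of a natural basis then makes B_k(F_Y(Y)) change
  sign under the reflection when k is odd, while B_j(F_X(X)) is unchanged. Transporting the
  covariance along the measure-preserving reflection therefore multiplies it by -1, so it
  vanishes. Vertical and radial symmetry work the same way, with the sign (-1)^j resp.
  (-1)^(j+k).\<close>

lemma distr_eq_compose:
  assumes "U \<in> M \<rightarrow>\<^sub>M N" "V \<in> M \<rightarrow>\<^sub>M N" "\<phi> \<in> N \<rightarrow>\<^sub>M K"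
    and "distr M N U = distr M N V"
  shows "distr M K (\<lambda>\<omega>. \<phi> (U \<omega>)) = distr M K (\<lambda>\<omega>. \<phi> (V \<omega>))"
  using distr_distr[OF assms(3,1)] distr_distr[OF assms(3,2)] assms(4)
  by (simp add: comp_def)

lemma distr_pair_eq_marginals:
  fixes U V U' V' :: "'a \<Rightarrow> real"
  assumes [measurable]: "U \<in> borel_measurable M" "V \<in> borel_measurable M"
    "U' \<in> borel_measurable M" "V' \<in> borel_measurable M"
    and law: "distr M borel (\<lambda>\<omega>. (U \<omega>, V \<omega>)) = distr M borel (\<lambda>\<omega>. (U' \<omega>, V' \<omega>))"
  shows "distr M borel U = distr M borel U'" and "distr M borel V = distr M borel V'"
  using distr_eq_compose[OF _ _ measurable_fst[of "borel :: real measure" "borel :: real measure",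
        unfolded borel_prod] law]
    distr_eq_compose[OF _ _ measurable_snd[of "borel :: real measure" "borel :: real measure",
        unfolded borel_prod] law]
  by simp_all

text \<open>No integrability hypothesis is needed: the transport of integrals along the law of Z
  holds for non-integrable functions as well, where both sides are 0.\<close>

lemma rv_cov_eq_0_if_odd_under_invariance:
  fixes u v :: "'b \<Rightarrow> real"
  assumes Z: "Z \<in> M \<rightarrow>\<^sub>M N" and T: "T \<in> N \<rightarrow>\<^sub>M N"
    and law: "distr M N Z = distr M N (\<lambda>\<omega>. T (Z \<omega>))"
    and u: "u \<in> borel_measurable N" and v: "v \<in> borel_measurable N"
    and u_odd: "\<And>z. u (T z) = e\<^sub>u * u z" and v_odd: "\<And>z. v (T z) = e\<^sub>v * v z"
    and e: "e\<^sub>u * e\<^sub>v = -1"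
  shows "rv_cov M (\<lambda>\<omega>. u (Z \<omega>)) (\<lambda>\<omega>. v (Z \<omega>)) = 0"
proof -
  have invariant: "(\<integral>\<omega>. h (Z \<omega>) \<partial>M) = (\<integral>\<omega>. h (T (Z \<omega>)) \<partial>M)"
    if "h \<in> borel_measurable N" for h :: "'b \<Rightarrow> real"
    using integral_distr[OF Z that] integral_distr[OF measurable_comp[OF Z T] that] law
    by (simp add: comp_def)
  define m\<^sub>u where "m\<^sub>u = rv_mean M (\<lambda>\<omega>. u (Z \<omega>))"
  define m\<^sub>v where "m\<^sub>v = rv_mean M (\<lambda>\<omega>. v (Z \<omega>))"
  have mean_u: "e\<^sub>u * m\<^sub>u = m\<^sub>u"
    using invariant[OF u] by (simp add: m\<^sub>u_def rv_mean_def u_odd)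
  have mean_v: "e\<^sub>v * m\<^sub>v = m\<^sub>v"
    using invariant[OF v] by (simp add: m\<^sub>v_def rv_mean_def v_odd)
  have "(u (T z) - m\<^sub>u) * (v (T z) - m\<^sub>v) = (e\<^sub>u * u z - e\<^sub>u * m\<^sub>u) * (e\<^sub>v * v z - e\<^sub>v * m\<^sub>v)" for z
    by (simp add: u_odd v_odd mean_u mean_v)
  also have "\<dots> z = (e\<^sub>u * e\<^sub>v) * ((u z - m\<^sub>u) * (v z - m\<^sub>v))" for z
    by (simp add: algebra_simps)
  finally have "rv_cov M (\<lambda>\<omega>. u (Z \<omega>)) (\<lambda>\<omega>. v (Z \<omega>)) = - rv_cov M (\<lambda>\<omega>. u (Z \<omega>)) (\<lambda>\<omega>. v (Z \<omega>))"
    using invariant[of "\<lambda>z. (u z - m\<^sub>u) * (v z - m\<^sub>v)"] u v e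
    by (simp add: rv_cov_def m\<^sub>u_def[symmetric] m\<^sub>v_def[symmetric])
  then show ?thesis by simp
qed

lemma (in real_distribution) cdf_reflect:
  assumes sym: "distr M borel (\<lambda>x. c - x) = M" and atom: "measure M {t} = 0"
  shows "cdf M (c - t) = 1 - cdf M t"
proof -
  have "cdf M (c - t) = measure (distr M borel (\<lambda>x. c - x)) {..c - t}"
    by (simp add: sym cdf_def)
  also have "\<dots> = measure M {t..}"
    by (subst measure_distr) (auto intro: arg_cong[where f = "measure M"])
  also have "\<dots> = 1 - measure M {..<t}"
    using prob_compl[of "{..<t}"] by (simp add: Diff_eq)
  also have "measure M {..<t} = cdf M t"
    using finite_measure_Union[of "{..<t}" "{t}"] atom
    by (simp add: cdf_def ivl_disj_un_singleton(2)[symmetric])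
  finally show ?thesis .
qed

lemma distr_fun_reflect:
  assumes "prob_space M" "continuous_rv M Z"
    and sym: "distr M borel (\<lambda>\<omega>. c - Z \<omega>) = distr M borel Z"
  shows "distr_fun M Z (c - z) = 1 - distr_fun M Z z"
proof -
  interpret prob_space M by fact
  have Z: "Z \<in> borel_measurable M" and cont: "isCont (cdf (distr M borel Z)) z"
    using assms(2) by (simp_all add: continuous_rv_def distr_fun_def)
  interpret F: real_distribution "distr M borel Z" using Z by simp
  have "distr (distr M borel Z) borel (\<lambda>x. c - x) = distr M borel Z"
    using distr_distr[of "\<lambda>x. c - x" borel borel Z M] Z sym by (simp add: comp_def)
  then show ?thesis
    using F.cdf_reflect cont F.isCont_cdf by (simp add: distr_fun_def)
qed

lemma
  assumes "natural_basis_function j b" "prob_space M" "continuous_rv M Z"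
  shows borel_measurable_natural_basis_distr_fun: "(\<lambda>x. b (distr_fun M Z x)) \<in> borel_measurable borel"
    and natural_basis_distr_fun_reflect:
      "distr M borel (\<lambda>\<omega>. c - Z \<omega>) = distr M borel Z \<Longrightarrow>
         b (distr_fun M Z (c - z)) = (-1) ^ j * b (distr_fun M Z z)"
proof -
  interpret prob_space M by fact
  have Z: "Z \<in> borel_measurable M" using assms(3) by (simp add: continuous_rv_def)
  interpret F: real_distribution "distr M borel Z" using Z by simp
  have range: "distr_fun M Z x \<in> {0..1}" for x
    using F.cdf_nonneg F.cdf_bounded_prob by (simp add: distr_fun_def)
  have "continuous_on UNIV (distr_fun M Z)"
    using assms(3) by (simp add: continuous_rv_def continuous_on_eq_continuous_at)
  moreover have "continuous_on {0..1} b"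
    using assms(1) by (simp add: natural_basis_function_def)
  ultimately have "continuous_on UNIV (\<lambda>x. b (distr_fun M Z x))"
    using range by (blast intro: continuous_on_compose2)
  then show "(\<lambda>x. b (distr_fun M Z x)) \<in> borel_measurable borel"
    by (rule borel_measurable_continuous_onI)
  assume "distr M borel (\<lambda>\<omega>. c - Z \<omega>) = distr M borel Z"
  then show "b (distr_fun M Z (c - z)) = (-1) ^ j * b (distr_fun M Z z)"
    using distr_fun_reflect[OF assms(2,3)] assms(1) range
    by (simp add: natural_basis_function_def)
qed

context
  fixes M :: "'a measure" and X Y :: "'a \<Rightarrow> real" and B :: "nat \<Rightarrow> real \<Rightarrow> real"
  assumes M: "prob_space M" and X: "continuous_rv M X" and Y: "continuous_rv M Y"
    and B: "natural_correlation_basis B"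
begin

lemma borel_measurable_X_Y: "X \<in> borel_measurable M" "Y \<in> borel_measurable M"
  using X Y by (simp_all add: continuous_rv_def)

lemma natural_basis_B: "j \<ge> 1 \<Longrightarrow> natural_basis_function j (B j)"
  using B by (simp add: natural_correlation_basis_def)

lemma basis_corr_eq_0_if_law_invariant:
  assumes j: "j \<ge> 1" and k: "k \<ge> 1"
    and law: "distr M borel (\<lambda>\<omega>. (X \<omega>, Y \<omega>)) = distr M borel (\<lambda>\<omega>. (s\<^sub>X (X \<omega>), s\<^sub>Y (Y \<omega>)))"
    and s: "s\<^sub>X \<in> borel_measurable borel" "s\<^sub>Y \<in> borel_measurable borel"
    and odd_X: "\<And>x. B j (distr_fun M X (s\<^sub>X x)) = e\<^sub>X * B j (distr_fun M X x)"
    and odd_Y: "\<And>y. B k (distr_fun M Y (s\<^sub>Y y)) = e\<^sub>Y * B k (distr_fun M Y y)"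
    and e: "e\<^sub>X * e\<^sub>Y = -1"
  shows "basis_corr B j k M X Y = 0"
proof -
  note [measurable] = borel_measurable_X_Y s
    borel_measurable_natural_basis_distr_fun[OF natural_basis_B[OF j] M X]
    borel_measurable_natural_basis_distr_fun[OF natural_basis_B[OF k] M Y]
  have "(\<lambda>(x, y). (s\<^sub>X x, s\<^sub>Y y)) \<in> borel_measurable (borel :: (real \<times> real) measure)"
    and "(\<lambda>p. B j (distr_fun M X (fst p))) \<in> borel_measurable (borel :: (real \<times> real) measure)"
    and "(\<lambda>p. B k (distr_fun M Y (snd p))) \<in> borel_measurable (borel :: (real \<times> real) measure)"
    by (simp_all only: borel_prod[symmetric]) measurable
  then have "rv_cov M (\<lambda>\<omega>. B j (distr_fun M X (fst (X \<omega>, Y \<omega>))))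
      (\<lambda>\<omega>. B k (distr_fun M Y (snd (X \<omega>, Y \<omega>)))) = 0"
    by (intro rv_cov_eq_0_if_odd_under_invariance[where T = "\<lambda>(x, y). (s\<^sub>X x, s\<^sub>Y y)"])
      (use law odd_X odd_Y e in auto)
  then show ?thesis by (simp add: basis_corr_def rv_corr_def)
qed

lemma basis_corr_eq_0_if_h_symmetric:
  assumes "h_symmetric M X Y" and j: "j \<ge> 1" and k: "k \<ge> 1" "odd k"
  shows "basis_corr B j k M X Y = 0"
proof -
  note [measurable] = borel_measurable_X_Y
  obtain a where "distr M borel (\<lambda>\<omega>. (X \<omega>, Y \<omega> - a)) = distr M borel (\<lambda>\<omega>. (X \<omega>, a - Y \<omega>))"
    using assms(1) by (auto simp: h_symmetric_def)
  from distr_eq_compose[OF _ _ _ this, where \<phi> = "\<lambda>p. p + (0, a)" and K = borel]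
  have law: "distr M borel (\<lambda>\<omega>. (X \<omega>, Y \<omega>)) = distr M borel (\<lambda>\<omega>. (X \<omega>, 2 * a - Y \<omega>))"
    by simp
  have "distr M borel (\<lambda>\<omega>. 2 * a - Y \<omega>) = distr M borel Y"
    using distr_pair_eq_marginals(2)[OF _ _ _ _ law] by simp
  then have "B k (distr_fun M Y (2 * a - y)) = - 1 * B k (distr_fun M Y y)" for y
    using natural_basis_distr_fun_reflect[OF natural_basis_B[OF k(1)] M Y] k(2) by simp
  then show ?thesis
    by (intro basis_corr_eq_0_if_law_invariant[OF j k(1) law, where e\<^sub>X = 1]) auto
qed

lemma basis_corr_eq_0_if_v_symmetric:
  assumes "v_symmetric M X Y" and j: "j \<ge> 1" "odd j" and k: "k \<ge> 1"
  shows "basis_corr B j k M X Y = 0"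
proof -
  note [measurable] = borel_measurable_X_Y
  obtain b where "distr M borel (\<lambda>\<omega>. (X \<omega> - b, Y \<omega>)) = distr M borel (\<lambda>\<omega>. (b - X \<omega>, Y \<omega>))"
    using assms(1) by (auto simp: v_symmetric_def)
  from distr_eq_compose[OF _ _ _ this, where \<phi> = "\<lambda>p. p + (b, 0)" and K = borel]
  have law: "distr M borel (\<lambda>\<omega>. (X \<omega>, Y \<omega>)) = distr M borel (\<lambda>\<omega>. (2 * b - X \<omega>, Y \<omega>))"
    by simp
  have "distr M borel (\<lambda>\<omega>. 2 * b - X \<omega>) = distr M borel X"
    using distr_pair_eq_marginals(1)[OF _ _ _ _ law] by simp
  then have "B j (distr_fun M X (2 * b - x)) = - 1 * B j (distr_fun M X x)" for x
    using natural_basis_distr_fun_reflect[OF natural_basis_B[OF j(1)] M X] j(2) by simp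
  then show ?thesis
    by (intro basis_corr_eq_0_if_law_invariant[OF j(1) k law, where e\<^sub>Y = 1]) auto
qed

lemma basis_corr_eq_0_if_radially_symmetric:
  assumes "radially_symmetric M X Y" and j: "j \<ge> 1" and k: "k \<ge> 1" and odd: "odd (j + k)"
  shows "basis_corr B j k M X Y = 0"
proof -
  note [measurable] = borel_measurable_X_Y
  obtain a b where
    "distr M borel (\<lambda>\<omega>. (X \<omega> - b, Y \<omega> - a)) = distr M borel (\<lambda>\<omega>. (b - X \<omega>, a - Y \<omega>))"
    using assms(1) by (auto simp: radially_symmetric_def)
  from distr_eq_compose[OF _ _ _ this, where \<phi> = "\<lambda>p. p + (b, a)" and K = borel]
  have law: "distr M borel (\<lambda>\<omega>. (X \<omega>, Y \<omega>)) = distr M borel (\<lambda>\<omega>. (2 * b - X \<omega>, 2 * a - Y \<omega>))"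
    by simp
  have "distr M borel (\<lambda>\<omega>. 2 * b - X \<omega>) = distr M borel X"
    and "distr M borel (\<lambda>\<omega>. 2 * a - Y \<omega>) = distr M borel Y"
    using distr_pair_eq_marginals[OF _ _ _ _ law] by simp_all
  then have "B j (distr_fun M X (2 * b - x)) = (- 1) ^ j * B j (distr_fun M X x)"
    and "B k (distr_fun M Y (2 * a - y)) = (- 1) ^ k * B k (distr_fun M Y y)" for x y
    using natural_basis_distr_fun_reflect[OF natural_basis_B[OF j] M X]
      natural_basis_distr_fun_reflect[OF natural_basis_B[OF k] M Y] by simp_all
  moreover have "(- 1) ^ j * (- 1) ^ k = (- 1 :: real)"
    using odd by (simp add: power_add[symmetric])
  ultimately show ?thesis
    by (intro basis_corr_eq_0_if_law_invariant[OF j k law]) auto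
qed

end

theorem proposition4:
  fixes M :: "'a measure" and X Y :: "'a \<Rightarrow> real" and B :: "nat \<Rightarrow> real \<Rightarrow> real"
  assumes "prob_space M"
    and "continuous_rv M X" and "continuous_rv M Y"
    and "natural_correlation_basis B"
  shows "(h_symmetric M X Y \<longrightarrow> (\<forall>j\<ge>1. \<forall>k\<ge>1. odd k \<longrightarrow> basis_corr B j k M X Y = 0))
       \<and> (v_symmetric M X Y \<longrightarrow> (\<forall>j\<ge>1. \<forall>k\<ge>1. odd j \<longrightarrow> basis_corr B j k M X Y = 0))
       \<and> (radially_symmetric M X Y \<longrightarrow> (\<forall>j\<ge>1. \<forall>k\<ge>1. odd (j + k) \<longrightarrow> basis_corr B j k M X Y = 0))
       \<and> (jointly_symmetric M X Y \<longrightarrow>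
            (\<forall>j\<ge>1. \<forall>k\<ge>1. (odd j \<or> odd k) \<longrightarrow> basis_corr B j k M X Y = 0))"
  using basis_corr_eq_0_if_h_symmetric[OF assms] basis_corr_eq_0_if_v_symmetric[OF assms]
    basis_corr_eq_0_if_radially_symmetric[OF assms]
  by (auto simp: jointly_symmetric_def)

end
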